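(* For all $y,k\in\mathbb N_0$, we have $y+2k+\{4,6,7,8,10,11\}+4\cdot[0,k]\in\mathcal L(C_2^5)$.
   Context: $C_2^r$ denotes an elementary abelian $2$-group of rank $r$; $[a,b]=\{x\in\mathbb Z:a\le x\le b\}$. For $L,L'\subset\mathbb Z$ and $y,k\in\mathbb Z$: $L+L'=\{a+b:a\in L,b\in L'\}$, $y+L=\{y\}+L$, and $k\cdot L=\{ka:a\in L\}$ (so $4\cdot[0,k]=\{0,4,\dots,4k\}$). For a subset $G_0$ of a finite abelian group $G$, a sequence over $G_0$ is an element of the free abelian monoid $\mathcal F(G_0)$ with basis $G_0$ (a finite unordered list of elements of $G_0$, repetitions allowed). $\mathcal B(G_0)$ is the monoid of zero-sum sequences over $G_0$ (including the empty sequence). An atom is a minimal zero-sum sequence, i.e. a nonempty zero-sum sequence that is not a product of two nonempty zero-sum sequences. For $B\in\mathcal B(G_0)$, $\mathsf L(B)=\{k\in\mathbb N_0: B \text{ is a product of } k \text{ atoms}\}$, and $\mathcal L(G_0)=\{\mathsf L(B):B\in\mathcal B(G_0)\}$; $\mathcal L(G)$ is the case $G_0=G$. *)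

theory Defs
  imports "HOL-Analysis.Analysis" "HOL-Library.Z2" "HOL-Library.Multiset"
begin

text \<open>Sequences over G0 are finite multisets of elements of G0 (free abelian monoid F(G0)).\<close>

definition zero_sum_seqs :: "'a::comm_monoid_add set \<Rightarrow> 'a multiset set" where
  "zero_sum_seqs G0 = {S. set_mset S \<subseteq> G0 \<and> sum_mset S = 0}"

definition is_atom :: "'a::comm_monoid_add set \<Rightarrow> 'a multiset \<Rightarrow> bool" where
  "is_atom G0 A \<longleftrightarrow> A \<in> zero_sum_seqs G0 \<and> A \<noteq> {#} \<and>
     \<not> (\<exists>U V. U \<in> zero_sum_seqs G0 \<and> V \<in> zero_sum_seqs G0 \<and> U \<noteq> {#} \<and> V \<noteq> {#} \<and> A = U + V)"

definition lengths :: "'a::comm_monoid_add set \<Rightarrow> 'a multiset \<Rightarrow> nat set" where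
  "lengths G0 B = {k. \<exists>As :: 'a multiset multiset.
      size As = k \<and> (\<forall>A\<in>#As. is_atom G0 A) \<and> sum_mset As = B}"

definition system_of_lengths :: "'a::comm_monoid_add set \<Rightarrow> nat set set" where
  "system_of_lengths G0 = {lengths G0 B | B. B \<in> zero_sum_seqs G0}"

type_synonym C2_5 = "bit ^ 5"

end

theory Submission
  imports Defs
begin

text \<open>
  Let \<open>e1, \<dots>, e5\<close> be the standard basis of \<open>C\<^sub>2\<^sup>5\<close>, \<open>e0 = e1 + \<dots> + e5\<close>,
  \<open>f1 = e1 + e2 + e5\<close> and \<open>f2 = e3 + e4 + e5\<close>, and consider
  \<open>B = 0^y e1^(2k+4) e2^(2k+4) e3^(2k+4) e4^(2k+4) e5^(2k+3) e0^(2k+3) f1 f2\<close>.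
  The atoms dividing \<open>B\<close> are \<open>0\<close>, the squares \<open>g\<^sup>2\<close> and the circuits, i.e.\ the seven
  nonempty zero-sum subsets of the eight nonzero elements (the nonzero vectors of their
  3-dimensional space of relations). A factorization
  of \<open>B\<close> is therefore given by sixteen multiplicities subject to one linear equation per
  element. Since \<open>f1\<close> and \<open>f2\<close> occur only once, exactly one circuit through each of them is
  used, which leaves six cases; in each of them the length is \<open>y + 2k + \<alpha> + 4j\<close> with
  \<open>\<alpha> \<in> {4, 6, 7}\<close> and \<open>j \<le> k + 1\<close>, and all these values occur. Shifting \<open>j = k + 1\<close> to
  \<open>\<alpha> + 4\<close> turns this into the set of the theorem.
\<close>

lemma is_atom_iff:
  "is_atom G0 A \<longleftrightarrow> A \<in> zero_sum_seqs G0 \<and> A \<noteq> {#} \<and>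
     (\<forall>U. U \<subseteq># A \<longrightarrow> U \<noteq> {#} \<longrightarrow> sum_mset U = 0 \<longrightarrow> U = A)"
proof
  assume atom: "is_atom G0 A"
  then have A: "set_mset A \<subseteq> G0" "sum_mset A = 0" "A \<noteq> {#}"
    by (simp_all add: is_atom_def zero_sum_seqs_def)
  have "U = A" if U: "U \<subseteq># A" "U \<noteq> {#}" "sum_mset U = 0" for U
  proof (rule ccontr)
    assume "U \<noteq> A"
    define V where "V = A - U"
    have A_split: "A = U + V" using U(1) by (simp add: V_def)
    then have "sum_mset V = 0" using A(2) U(3) by simp
    moreover have "set_mset U \<subseteq> G0" "set_mset V \<subseteq> G0"
      using A(1) A_split by auto
    moreover have "V \<noteq> {#}" using A_split \<open>U \<noteq> A\<close> by auto
    ultimately show False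
      using atom A_split U(2,3) by (auto simp: is_atom_def zero_sum_seqs_def)
  qed
  with A show "A \<in> zero_sum_seqs G0 \<and> A \<noteq> {#} \<and>
     (\<forall>U. U \<subseteq># A \<longrightarrow> U \<noteq> {#} \<longrightarrow> sum_mset U = 0 \<longrightarrow> U = A)"
    by (simp add: zero_sum_seqs_def)
next
  assume A: "A \<in> zero_sum_seqs G0 \<and> A \<noteq> {#} \<and>
     (\<forall>U. U \<subseteq># A \<longrightarrow> U \<noteq> {#} \<longrightarrow> sum_mset U = 0 \<longrightarrow> U = A)"
  show "is_atom G0 A"
    unfolding is_atom_def
  proof (intro conjI notI)
    assume "\<exists>U V. U \<in> zero_sum_seqs G0 \<and> V \<in> zero_sum_seqs G0 \<and> U \<noteq> {#} \<and> V \<noteq> {#} \<and> A = U + V"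
    then obtain U V where "sum_mset U = 0" "U \<noteq> {#}" "V \<noteq> {#}" "A = U + V"
      by (auto simp: zero_sum_seqs_def)
    moreover have "U \<subseteq># A" "U \<noteq> A" using \<open>A = U + V\<close> \<open>V \<noteq> {#}\<close> by simp_all
    ultimately show False using A by blast
  qed (use A in auto)
qed

lemma is_atom_zero_sum_submset:
  "is_atom G0 A \<Longrightarrow> U \<subseteq># A \<Longrightarrow> U \<noteq> {#} \<Longrightarrow> sum_mset U = 0 \<Longrightarrow> U = A"
  by (simp add: is_atom_iff)

lemma proper_submset_size_less:
  "U \<subseteq># A \<Longrightarrow> U \<noteq> A \<Longrightarrow> size U < size A"
  by (simp add: mset_subset_size subset_mset.le_neq_trans)

lemma is_atom_zero: "0 \<in> G0 \<Longrightarrow> is_atom G0 {#0#}"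
  by (auto simp: is_atom_iff zero_sum_seqs_def dest!: proper_submset_size_less)

lemma is_atom_double:
  assumes "g \<in> G0" "g \<noteq> 0" "g + g = 0"
  shows "is_atom G0 {#g, g#}"
  unfolding is_atom_iff
proof (intro conjI allI impI)
  fix U assume U: "U \<subseteq># {#g, g#}" "U \<noteq> {#}" "sum_mset U = 0"
  show "U = {#g, g#}"
  proof (rule ccontr)
    assume "U \<noteq> {#g, g#}"
    then have "size U < 2" using proper_submset_size_less[OF U(1)] by simp
    moreover have "size U \<noteq> 0" using U(2) by simp
    ultimately have "size U = 1" by linarith
    then obtain u where "U = {#u#}" using size_1_singleton_mset by blast
    moreover from this have "u = g" using U(1) by simp
    ultimately show False using U(3) assms(2) by simp
  qed
qed (use assms in \<open>auto simp: zero_sum_seqs_def\<close>)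

lemma in_lengths_imp_zero_sum_seq:
  assumes "n \<in> lengths G0 B"
  shows "B \<in> zero_sum_seqs G0"
proof -
  obtain As where As: "\<forall>A\<in>#As. is_atom G0 A" "sum_mset As = B"
    using assms by (auto simp: lengths_def)
  have "\<forall>A\<in>#As. A \<in> zero_sum_seqs G0" using As(1) by (simp add: is_atom_def)
  then have "sum_mset As \<in> zero_sum_seqs G0"
    by (induction As) (auto simp: zero_sum_seqs_def)
  with As(2) show ?thesis by simp
qed

definition counted_mset :: "nat list \<Rightarrow> 'a list \<Rightarrow> 'a multiset" where
  "counted_mset ns xs = (\<Sum>(n, x)\<leftarrow>zip ns xs. replicate_mset n x)"

lemma set_counted_mset: "set_mset (counted_mset ns xs) \<subseteq> set xs"
  by (auto simp: counted_mset_def dest: set_zip_rightD split: if_splits)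

lemma size_counted_mset: "length ns = length xs \<Longrightarrow> size (counted_mset ns xs) = sum_list ns"
  by (induction ns xs rule: list_induct2) (simp_all add: counted_mset_def)

lemma count_counted_mset:
  "distinct xs \<Longrightarrow> count (counted_mset (map f xs) xs) x = (if x \<in> set xs then f x else 0)"
  by (induction xs) (auto simp: counted_mset_def)

lemma counted_mset_count:
  assumes "distinct xs" "set_mset M \<subseteq> set xs"
  shows "counted_mset (map (count M) xs) xs = M"
  using assms by (auto simp: multiset_eq_iff count_counted_mset count_eq_zero_iff)

lemma count_sum_counted_mset:
  "count (sum_mset (counted_mset ns Xs)) x = (\<Sum>(n, X)\<leftarrow>zip ns Xs. n * count X x)"
proof (induction ns Xs rule: list_induct2')
  case (4 n ns X Xs)
  have "count (sum_mset (replicate_mset n X)) x = n * count X x"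
    by (induction n) auto
  with 4 show ?case by (simp add: counted_mset_def)
qed (simp_all add: counted_mset_def)

lemma sum_list_in_lengths:
  assumes "\<forall>X\<in>set Xs. is_atom G0 X" "length ns = length Xs"
  shows "sum_list ns \<in> lengths G0 (sum_mset (counted_mset ns Xs))"
  unfolding lengths_def using assms set_counted_mset size_counted_mset by fastforce

lemma count_le_1_iff: "count A x \<le> 1 \<longleftrightarrow> count A x = of_bool (x \<in># A)"
proof (cases "x \<in># A")
  case True
  then show ?thesis by (auto simp: le_Suc_eq count_eq_zero_iff)
qed (simp add: not_in_iff)

lemma multiset_eq_iff_on:
  assumes "set_mset M \<subseteq> S" "set_mset N \<subseteq> S"
  shows "M = N \<longleftrightarrow> (\<forall>x\<in>S. count M x = count N x)"
  using assms by (metis count_eq_zero_iff multiset_eqI subsetD)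

lemma exhaust_5:
  fixes x :: 5
  shows "x = 1 \<or> x = 2 \<or> x = 3 \<or> x = 4 \<or> x = 5"
proof (induct x)
  case (of_int z)
  then have "z = 0 \<or> z = 1 \<or> z = 2 \<or> z = 3 \<or> z = 4" by fastforce
  then show ?case by auto
qed

lemma forall_5: "(\<forall>i::5. P i) \<longleftrightarrow> P 1 \<and> P 2 \<and> P 3 \<and> P 4 \<and> P 5"
  by (metis exhaust_5)

definition vec5 :: "bool \<Rightarrow> bool \<Rightarrow> bool \<Rightarrow> bool \<Rightarrow> bool \<Rightarrow> C2_5" where
  "vec5 x1 x2 x3 x4 x5 = (\<chi> i. of_bool (if i = 1 then x1 else if i = 2 then x2
     else if i = 3 then x3 else if i = 4 then x4 else x5))"

lemma vec5_nth:
  "vec5 x1 x2 x3 x4 x5 $ 1 = of_bool x1" "vec5 x1 x2 x3 x4 x5 $ 2 = of_bool x2"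
  "vec5 x1 x2 x3 x4 x5 $ 3 = of_bool x3" "vec5 x1 x2 x3 x4 x5 $ 4 = of_bool x4"
  "vec5 x1 x2 x3 x4 x5 $ 5 = of_bool x5"
  by (simp_all add: vec5_def)

lemma vec5_eq_iff [simp]:
  "vec5 x1 x2 x3 x4 x5 = vec5 y1 y2 y3 y4 y5 \<longleftrightarrow>
     x1 = y1 \<and> x2 = y2 \<and> x3 = y3 \<and> x4 = y4 \<and> x5 = y5"
  by (simp add: vec_eq_iff forall_5 vec5_nth)

lemma zero_eq_vec5: "(0::C2_5) = vec5 False False False False False"
  by (simp add: vec_eq_iff forall_5 vec5_nth)

lemma vec5_eq_0_iff [simp]:
  "vec5 x1 x2 x3 x4 x5 = 0 \<longleftrightarrow> \<not> x1 \<and> \<not> x2 \<and> \<not> x3 \<and> \<not> x4 \<and> \<not> x5"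
  "0 = vec5 x1 x2 x3 x4 x5 \<longleftrightarrow> \<not> x1 \<and> \<not> x2 \<and> \<not> x3 \<and> \<not> x4 \<and> \<not> x5"
  by (auto simp: zero_eq_vec5)

lemma vec5_add [simp]:
  "vec5 x1 x2 x3 x4 x5 + vec5 y1 y2 y3 y4 y5 =
     vec5 (x1 \<noteq> y1) (x2 \<noteq> y2) (x3 \<noteq> y3) (x4 \<noteq> y4) (x5 \<noteq> y5)"
proof -
  have "(of_bool x + of_bool y :: bit) = of_bool (x \<noteq> y)" for x y
    by (cases x; cases y) simp_all
  then show ?thesis by (simp add: vec_eq_iff forall_5 vec5_nth)
qed

lemma C2_5_add_self: "(x::C2_5) + x = 0"
  by (simp add: vec_eq_iff)

definition e1 :: C2_5 where "e1 = vec5 True False False False False"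
definition e2 :: C2_5 where "e2 = vec5 False True False False False"
definition e3 :: C2_5 where "e3 = vec5 False False True False False"
definition e4 :: C2_5 where "e4 = vec5 False False False True False"
definition e5 :: C2_5 where "e5 = vec5 False False False False True"
definition e0 :: C2_5 where "e0 = vec5 True True True True True"
definition f1 :: C2_5 where "f1 = vec5 True True False False True"
definition f2 :: C2_5 where "f2 = vec5 False False True True True"
lemmas support_defs = e1_def e2_def e3_def e4_def e5_def e0_def f1_def f2_def

definition support :: "C2_5 list" where
  "support = [e1, e2, e3, e4, e5, e0, f1, f2]"

text \<open>The nonempty zero-sum submultisets of \<open>mset support\<close>, i.e.\ the supports of the relations
  \<open>e0 = e1 + \<dots> + e5\<close>, \<open>f1 = e1 + e2 + e5\<close>, \<open>f2 = e3 + e4 + e5\<close> and of their sums.\<close>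

definition circuits :: "C2_5 multiset list" where
  "circuits = [{#e1, e2, e5, f1#}, {#e1, e2, e0, f2#}, {#e3, e4, e5, f2#}, {#e3, e4, e0, f1#},
     {#e5, e0, f1, f2#}, {#e1, e2, e3, e4, e5, e0#}, {#e1, e2, e3, e4, f1, f2#}]"

lemma distinct_support: "distinct support"
  by (simp add: support_def support_defs)

lemma zero_notin_support: "0 \<notin> set support"
  by (simp add: support_def support_defs)

lemma sum_counted_support_eq_0_iff:
  "sum_mset (counted_mset (map of_bool [p1, p2, p3, p4, p5, p0, q1, q2]) support) = 0 \<longleftrightarrow>
     p1 = (p0 \<noteq> q1) \<and> p2 = (p0 \<noteq> q1) \<and> p3 = (p0 \<noteq> q2) \<and> p4 = (p0 \<noteq> q2) \<and>
     p5 = (p0 \<noteq> (q1 \<noteq> q2))"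
  by (simp add: counted_mset_def support_def support_defs)

lemma zero_sum_counted_support:
  assumes "M = counted_mset (map of_bool [p1, p2, p3, p4, p5, p0, q1, q2]) support" "sum_mset M = 0"
  shows "M \<in> set ({#} # circuits)"
  using assms(2) unfolding assms(1) sum_counted_support_eq_0_iff
  by (cases p0; cases q1; cases q2) (simp_all add: counted_mset_def support_def circuits_def)

lemma squarefree_zero_sum_on_support:
  assumes "\<forall>x. count A x \<le> 1" "set_mset A \<subseteq> set support" "sum_mset A = 0"
  shows "A \<in> set ({#} # circuits)"
proof -
  have "count A = (\<lambda>x. of_bool (x \<in># A))"
    by (intro ext) (simp only: count_le_1_iff[symmetric] assms(1) simp_thms)
  then have "map (count A) support = map of_bool [e1 \<in># A, e2 \<in># A, e3 \<in># A, e4 \<in># A, e5 \<in># A,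
      e0 \<in># A, f1 \<in># A, f2 \<in># A]"
    by (simp only: support_def list.map)
  then have A: "A = counted_mset (map of_bool [e1 \<in># A, e2 \<in># A, e3 \<in># A, e4 \<in># A, e5 \<in># A,
      e0 \<in># A, f1 \<in># A, f2 \<in># A]) support"
    using counted_mset_count[OF distinct_support assms(2)] by simp
  from this assms(3) show ?thesis
    by (rule zero_sum_counted_support)
qed

lemma circuits_zero_sum: "X \<in> set circuits \<Longrightarrow> sum_mset X = 0"
  by (auto simp: circuits_def support_defs)

lemma circuits_squarefree: "X \<in> set circuits \<Longrightarrow> count X x \<le> 1"
  by (auto simp: circuits_def support_defs)

lemma set_circuits: "X \<in> set circuits \<Longrightarrow> set_mset X \<subseteq> set support"
  by (auto simp: circuits_def support_def)

lemma circuits_antichain: "X \<in> set circuits \<Longrightarrow> Y \<in> set circuits \<Longrightarrow> X \<subseteq># Y \<Longrightarrow> X = Y"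
  by (auto simp: circuits_def support_defs dest!: set_mset_mono)

lemma empty_notin_circuits: "{#} \<notin> set circuits"
  by (simp add: circuits_def)

lemma is_atom_circuit:
  assumes "C \<in> set circuits"
  shows "is_atom UNIV C"
  unfolding is_atom_iff
proof (intro conjI allI impI)
  fix U assume U: "U \<subseteq># C" "U \<noteq> {#}" "sum_mset U = 0"
  have "\<forall>x. count U x \<le> 1"
    using U(1) circuits_squarefree[OF assms] by (meson mset_subset_eq_count order_trans)
  moreover have "set_mset U \<subseteq> set support"
    using set_mset_mono[OF U(1)] set_circuits[OF assms] by blast
  ultimately have "U \<in> set circuits"
    using squarefree_zero_sum_on_support U(2,3) by fastforce
  then show "U = C" using assms U(1) by (rule circuits_antichain)
qed (use assms circuits_zero_sum empty_notin_circuits in \<open>auto simp: zero_sum_seqs_def\<close>)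

definition atoms :: "C2_5 multiset list" where
  "atoms = {#0#} # map (\<lambda>g. {#g, g#}) support @ circuits"

lemma is_atom_atoms:
  assumes "X \<in> set atoms"
  shows "is_atom UNIV X"
proof -
  consider "X = {#0#}" | g where "g \<in> set support" "X = {#g, g#}" | "X \<in> set circuits"
    using assms by (auto simp: atoms_def)
  then show ?thesis
  proof cases
    case 2
    then have "g \<noteq> 0" using zero_notin_support by blast
    with 2 show ?thesis by (simp add: is_atom_double C2_5_add_self)
  qed (simp_all add: is_atom_zero is_atom_circuit)
qed

lemma set_atoms: "X \<in> set atoms \<Longrightarrow> set_mset X \<subseteq> insert 0 (set support)"
  using set_circuits by (auto simp: atoms_def)

lemma distinct_atoms: "distinct atoms"
proof -
  have "distinct (map (\<lambda>X. map (count X) (0 # support)) atoms)"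
    by (simp add: atoms_def circuits_def support_def support_defs)
  then show ?thesis by (simp add: distinct_map)
qed

lemma atom_on_support:
  assumes atom: "is_atom UNIV A" and supp: "set_mset A \<subseteq> insert 0 (set support)"
  shows "A \<in> set atoms"
proof (cases "0 \<in># A")
  case True
  then have "{#0#} = A" by (intro is_atom_zero_sum_submset[OF atom]) simp_all
  then show ?thesis by (simp add: atoms_def)
next
  case no_zero: False
  show ?thesis
  proof (cases "\<exists>g. count A g \<ge> 2")
    case True
    then obtain g where g: "count A g \<ge> 2" by blast
    then have "{#g, g#} \<subseteq># A" by (intro mset_subset_eqI) (auto simp: count_add_mset)
    then have "{#g, g#} = A" by (intro is_atom_zero_sum_submset[OF atom]) (simp_all add: C2_5_add_self)
    moreover have "g \<in> set support" using supp no_zero g calculation by auto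
    ultimately show ?thesis by (auto simp: atoms_def)
  next
    case False
    then have "\<forall>x. count A x \<le> 1" by (metis not_less_eq_eq numeral_2_eq_2 One_nat_def)
    moreover have "set_mset A \<subseteq> set support" using supp no_zero by blast
    moreover have "sum_mset A = 0" "A \<noteq> {#}" using atom by (simp_all add: is_atom_def zero_sum_seqs_def)
    ultimately have "A \<in> set circuits" using squarefree_zero_sum_on_support[of A] by simp
    then show ?thesis by (simp add: atoms_def)
  qed
qed

definition B_seq :: "nat \<Rightarrow> nat \<Rightarrow> C2_5 multiset" where
  "B_seq y k = replicate_mset y 0 + replicate_mset (2*k + 4) e1 + replicate_mset (2*k + 4) e2
     + replicate_mset (2*k + 4) e3 + replicate_mset (2*k + 4) e4 + replicate_mset (2*k + 3) e5
     + replicate_mset (2*k + 3) e0 + {#f1, f2#}"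

text \<open>The arguments after \<open>y k\<close> are multiplicities of the atoms, in the order of \<open>atoms\<close>;
  the equations count \<open>0, e1, \<dots>, e5, e0, f1, f2\<close> in the resulting sequence.\<close>

definition B_count_equations ::
    "nat \<Rightarrow> nat \<Rightarrow> nat \<Rightarrow> nat \<Rightarrow> nat \<Rightarrow> nat \<Rightarrow> nat \<Rightarrow> nat \<Rightarrow> nat \<Rightarrow> nat \<Rightarrow> nat \<Rightarrow>
      nat \<Rightarrow> nat \<Rightarrow> nat \<Rightarrow> nat \<Rightarrow> nat \<Rightarrow> nat \<Rightarrow> nat \<Rightarrow> bool" where
  "B_count_equations y k z a1 a2 a3 a4 a5 a0 b1 b2 c1 c2 c3 c4 c5 c6 c7 \<longleftrightarrow>
     z = y \<and>
     2*a1 + c1 + c2 + c6 + c7 = 2*k + 4 \<and> 2*a2 + c1 + c2 + c6 + c7 = 2*k + 4 \<and>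
     2*a3 + c3 + c4 + c6 + c7 = 2*k + 4 \<and> 2*a4 + c3 + c4 + c6 + c7 = 2*k + 4 \<and>
     2*a5 + c1 + c3 + c5 + c6 = 2*k + 3 \<and> 2*a0 + c2 + c4 + c5 + c6 = 2*k + 3 \<and>
     2*b1 + c1 + c4 + c5 + c7 = 1 \<and> 2*b2 + c2 + c3 + c5 + c7 = 1"

lemma sum_counted_atoms_eq_B_seq_iff:
  "sum_mset (counted_mset [z, a1, a2, a3, a4, a5, a0, b1, b2, c1, c2, c3, c4, c5, c6, c7] atoms)
     = B_seq y k \<longleftrightarrow> B_count_equations y k z a1 a2 a3 a4 a5 a0 b1 b2 c1 c2 c3 c4 c5 c6 c7"
  (is "?M = _ \<longleftrightarrow> _")
proof -
  have "set_mset ?M \<subseteq> insert 0 (set support)"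
    using set_counted_mset set_atoms by fastforce
  moreover have "set_mset (B_seq y k) \<subseteq> insert 0 (set support)"
    by (auto simp: B_seq_def support_def)
  ultimately have "?M = B_seq y k \<longleftrightarrow> (\<forall>x\<in>insert 0 (set support). count ?M x = count (B_seq y k) x)"
    by (rule multiset_eq_iff_on)
  also have "\<dots> \<longleftrightarrow> B_count_equations y k z a1 a2 a3 a4 a5 a0 b1 b2 c1 c2 c3 c4 c5 c6 c7"
    by (simp add: count_sum_counted_mset atoms_def circuits_def support_def support_defs
        B_seq_def B_count_equations_def)
      (simp only: mult_2 add.assoc)
  finally show ?thesis .
qed

lemma B_count_equations_sum_list:
  assumes "B_count_equations y k z a1 a2 a3 a4 a5 a0 b1 b2 c1 c2 c3 c4 c5 c6 c7"
  shows "\<exists>\<alpha> j. \<alpha> \<in> {4, 6, 7} \<and> j \<le> k + 1 \<and>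
    sum_list [z, a1, a2, a3, a4, a5, a0, b1, b2, c1, c2, c3, c4, c5, c6, c7] = y + 2*k + \<alpha> + 4*j"
proof -
  define S where "S = sum_list [z, a1, a2, a3, a4, a5, a0, b1, b2, c1, c2, c3, c4, c5, c6, c7]"
  note eqs = assms[unfolded B_count_equations_def]
  txt \<open>Summing all equations gives \<open>total\<close>; in each case the equation of \<open>e1\<close>, \<open>e3\<close> or
    \<open>e5\<close> then determines \<open>c6\<close>, and hence \<open>S\<close>, in terms of \<open>a1\<close>, \<open>a3\<close> or \<open>a5\<close>.\<close>
  have total: "S + (c1 + c2 + c3 + c4 + c5) + 2*(c6 + c7) = y + 6*k + 12"
    using eqs unfolding S_def by simp
  have e1: "2*a1 + c1 + c2 + c6 + c7 = 2*k + 4" and e3: "2*a3 + c3 + c4 + c6 + c7 = 2*k + 4"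
    and e5: "2*a5 + c1 + c3 + c5 + c6 = 2*k + 3"
    and f1: "2*b1 + c1 + c4 + c5 + c7 = 1" and f2: "2*b2 + c2 + c3 + c5 + c7 = 1"
    using eqs by simp_all
  have odd_f1: "c1 + c4 + c5 + c7 = 1" using f1 by presburger
  have odd_f2: "c2 + c3 + c5 + c7 = 1" using f2 by presburger
  consider (C7) "c7 = 1" "c1 = 0" "c2 = 0" "c3 = 0" "c4 = 0" "c5 = 0"
    | (C5) "c5 = 1" "c1 = 0" "c2 = 0" "c3 = 0" "c4 = 0" "c7 = 0"
    | (C1_C2) "c1 = 1" "c2 = 1" "c3 = 0" "c4 = 0" "c5 = 0" "c7 = 0"
    | (C1_C3) "c1 = 1" "c3 = 1" "c2 = 0" "c4 = 0" "c5 = 0" "c7 = 0"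
    | (C2_C4) "c4 = 1" "c2 = 1" "c1 = 0" "c3 = 0" "c5 = 0" "c7 = 0"
    | (C3_C4) "c4 = 1" "c3 = 1" "c1 = 0" "c2 = 0" "c5 = 0" "c7 = 0"
    using odd_f1 odd_f2 by (cases "c7 = 0"; cases "c5 = 0"; cases "c1 = 0"; cases "c2 = 0") auto
  then have "\<exists>\<alpha> j. \<alpha> \<in> {4, 6, 7} \<and> j \<le> k + 1 \<and> S = y + 2*k + \<alpha> + 4*j"
  proof cases
    case C7
    show ?thesis
      by (rule exI[of _ 4], rule exI[of _ a1], intro conjI)
        (simp, (use e1 C7 in presburger), (use total e1 C7 in simp))
  next
    case C5
    show ?thesis
      by (rule exI[of _ 7], rule exI[of _ a5], intro conjI)
        (simp, (use e5 C5 in presburger), (use total e5 C5 in simp))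
  next
    case C1_C2
    show ?thesis
      by (rule exI[of _ 6], rule exI[of _ a1], intro conjI)
        (simp, (use e1 C1_C2 in presburger), (use total e1 C1_C2 in simp))
  next
    case C1_C3
    show ?thesis
      by (rule exI[of _ 4], rule exI[of _ a1], intro conjI)
        (simp, (use e1 C1_C3 in presburger), (use total e1 C1_C3 in simp))
  next
    case C2_C4
    show ?thesis
      by (rule exI[of _ 4], rule exI[of _ a1], intro conjI)
        (simp, (use e1 C2_C4 in presburger), (use total e1 C2_C4 in simp))
  next
    case C3_C4
    show ?thesis
      by (rule exI[of _ 6], rule exI[of _ a3], intro conjI)
        (simp, (use e3 C3_C4 in presburger), (use total e3 C3_C4 in simp))
  qed
  then show ?thesis unfolding S_def .
qed

lemma B_count_equations_imp_in_lengths: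
  assumes "B_count_equations y k z a1 a2 a3 a4 a5 a0 b1 b2 c1 c2 c3 c4 c5 c6 c7"
  shows "sum_list [z, a1, a2, a3, a4, a5, a0, b1, b2, c1, c2, c3, c4, c5, c6, c7]
    \<in> lengths UNIV (B_seq y k)"
proof -
  let ?ns = "[z, a1, a2, a3, a4, a5, a0, b1, b2, c1, c2, c3, c4, c5, c6, c7]"
  have "length ?ns = length atoms" by (simp add: atoms_def support_def circuits_def)
  then have "sum_list ?ns \<in> lengths UNIV (sum_mset (counted_mset ?ns atoms))"
    using is_atom_atoms by (intro sum_list_in_lengths) simp_all
  moreover have "sum_mset (counted_mset ?ns atoms) = B_seq y k"
    using assms by (simp only: sum_counted_atoms_eq_B_seq_iff)
  ultimately show ?thesis by simp
qed

lemma in_lengths_B_seq: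
  assumes "\<alpha> \<in> {4, 6, 7}" "j \<le> k + 1"
  shows "y + 2*k + \<alpha> + 4*j \<in> lengths UNIV (B_seq y k)"
proof -
  from assms(1) consider "\<alpha> = 4" | "\<alpha> = 6" | "\<alpha> = 7" by blast
  then show ?thesis
  proof cases
    case 1
    have eqs: "B_count_equations y k y j j j j j j 0 0 0 0 0 0 0 (2*(k + 1 - j) + 1) 1"
      using assms(2) by (simp add: B_count_equations_def)
    have len: "sum_list [y, j, j, j, j, j, j, 0, 0, 0, 0, 0, 0, 0, 2*(k + 1 - j) + 1, 1]
      = y + 2*k + \<alpha> + 4*j"
      using 1 assms(2) by simp
    show ?thesis using B_count_equations_imp_in_lengths[OF eqs] by (simp only: len)
  next
    case 2
    have eqs: "B_count_equations y k y j j (j + 1) (j + 1) j j 0 0 1 1 0 0 0 (2*(k + 1 - j)) 0"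
      using assms(2) by (simp add: B_count_equations_def)
    have len: "sum_list [y, j, j, j + 1, j + 1, j, j, 0, 0, 1, 1, 0, 0, 0, 2*(k + 1 - j), 0]
      = y + 2*k + \<alpha> + 4*j"
      using 2 assms(2) by simp
    show ?thesis using B_count_equations_imp_in_lengths[OF eqs] by (simp only: len)
  next
    case 3
    have eqs: "B_count_equations y k y (j + 1) (j + 1) (j + 1) (j + 1) j j 0 0 0 0 0 0 1 (2*(k + 1 - j)) 0"
      using assms(2) by (simp add: B_count_equations_def)
    have len: "sum_list [y, j + 1, j + 1, j + 1, j + 1, j, j, 0, 0, 0, 0, 0, 0, 1, 2*(k + 1 - j), 0]
      = y + 2*k + \<alpha> + 4*j"
      using 3 assms(2) by simp
    show ?thesis using B_count_equations_imp_in_lengths[OF eqs] by (simp only: len)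
  qed
qed

lemma lengths_B_seq:
  "lengths UNIV (B_seq y k) = {y + 2*k + \<alpha> + 4*j | \<alpha> j. \<alpha> \<in> {4, 6, 7} \<and> j \<le> k + 1}"
proof (intro set_eqI iffI)
  fix t assume "t \<in> lengths UNIV (B_seq y k)"
  then obtain As where As: "size As = t" "\<forall>A\<in>#As. is_atom UNIV A" "sum_mset As = B_seq y k"
    by (auto simp: lengths_def)
  have supp: "set_mset (B_seq y k) \<subseteq> insert 0 (set support)"
    by (auto simp: B_seq_def support_def)
  have "set_mset As \<subseteq> set atoms"
  proof
    fix A assume "A \<in># As"
    moreover from this have "set_mset A \<subseteq> set_mset (B_seq y k)"
      unfolding As(3)[symmetric] by auto
    ultimately show "A \<in> set atoms"
      using As(2) supp by (auto intro: atom_on_support)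
  qed
  then have As_counted: "counted_mset (map (count As) atoms) atoms = As"
    by (rule counted_mset_count[OF distinct_atoms])
  obtain z a1 a2 a3 a4 a5 a0 b1 b2 c1 c2 c3 c4 c5 c6 c7 where
    ns: "map (count As) atoms = [z, a1, a2, a3, a4, a5, a0, b1, b2, c1, c2, c3, c4, c5, c6, c7]"
    by (simp add: atoms_def support_def circuits_def)
  have "B_count_equations y k z a1 a2 a3 a4 a5 a0 b1 b2 c1 c2 c3 c4 c5 c6 c7"
    using As(3) As_counted unfolding ns by (simp add: sum_counted_atoms_eq_B_seq_iff[symmetric])
  then obtain \<alpha> j where \<alpha>j: "\<alpha> \<in> {4, 6, 7}" "j \<le> k + 1"
    and "sum_list (map (count As) atoms) = y + 2*k + \<alpha> + 4*j"
    unfolding ns by (blast dest: B_count_equations_sum_list)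
  moreover have "t = sum_list (map (count As) atoms)"
    using As(1) As_counted size_counted_mset[of "map (count As) atoms" atoms] by simp
  ultimately have "t = y + 2*k + \<alpha> + 4*j" by simp
  with \<alpha>j show "t \<in> {y + 2*k + \<alpha> + 4*j | \<alpha> j. \<alpha> \<in> {4, 6, 7} \<and> j \<le> k + 1}"
    by blast
qed (auto intro: in_lengths_B_seq)

lemma shifted_length_set:
  "{(n::nat) + \<alpha> + 4*i | \<alpha> i. \<alpha> \<in> {4, 6, 7, 8, 10, 11} \<and> i \<le> k} =
     {n + \<alpha> + 4*j | \<alpha> j. \<alpha> \<in> {4, 6, 7} \<and> j \<le> k + 1}" (is "?L = ?R")
proof (intro set_eqI iffI)
  fix t assume "t \<in> ?L"
  then obtain \<alpha> i where t: "t = n + \<alpha> + 4*i" "\<alpha> \<in> {4, 6, 7, 8, 10, 11}" "i \<le> k" by blast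
  show "t \<in> ?R"
  proof (cases "\<alpha> \<in> {4, 6, 7}")
    case False
    then have "t = n + (\<alpha> - 4) + 4*(i + 1)" "\<alpha> - 4 \<in> {4, 6, 7}" using t by auto
    then show ?thesis using t(3) by fastforce
  next
    case True
    moreover have "i \<le> k + 1" using t(3) by simp
    ultimately show ?thesis using t(1) by blast
  qed
next
  fix t assume "t \<in> ?R"
  then obtain \<alpha> j where t: "t = n + \<alpha> + 4*j" "\<alpha> \<in> {4, 6, 7}" "j \<le> k + 1" by blast
  show "t \<in> ?L"
  proof (cases "j = k + 1")
    case True
    then have "t = n + (\<alpha> + 4) + 4*k" "\<alpha> + 4 \<in> {4, 6, 7, 8, 10, 11}" using t by auto
    then show ?thesis by blast
  next
    case False
    then have "j \<le> k" using t(3) by simp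
    then show ?thesis using t(1,2) by blast
  qed
qed

theorem lemma3p10:
  fixes y k :: nat
  shows "{y + 2 * k + a + 4 * i | a i. a \<in> {4, 6, 7, 8, 10, 11} \<and> i \<le> k}
           \<in> system_of_lengths (UNIV :: C2_5 set)"
proof -
  have "{y + 2 * k + a + 4 * i | a i. a \<in> {4, 6, 7, 8, 10, 11} \<and> i \<le> k} = lengths UNIV (B_seq y k)"
    by (simp only: shifted_length_set lengths_B_seq)
  moreover have "B_seq y k \<in> zero_sum_seqs UNIV"
    using in_lengths_B_seq[of 4 0 k y] by (auto intro: in_lengths_imp_zero_sum_seq)
  ultimately show ?thesis
    unfolding system_of_lengths_def by blast
qed

end
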